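(* Let $X$ be a random variable taking values in $\mathbb{C}$, and let $\mathbf{S}\in\mathbb{C}^{n\times n}$ have Jordan decomposition $\mathbf{S}=\mathbf{P}\,\mathrm{blkdiag}(\mathbf{J}_i)_{i=1}^{k}\,\mathbf{P}^{-1}$, where $\mathbf{P}$ is nonsingular and each $\mathbf{J}_i$ is a Jordan block of size $m_i\times m_i$ with eigenvalue $\lambda_i$, $\sum_i m_i=n$. Then: (i) The matrix Laplace transform $\boldsymbol{\mathcal{L}}_X(\mathbf{S})$ exists if and only if $$\mathbb{E}\left[(-X)^{j-1}e^{-\lambda_i X}\right]\in\mathbb{C}\quad\text{for all } j\in\{1,\dots,m_i\},\ i\in\{1,\dots,k\}$$ (i.e. $\boldsymbol{\mathcal{L}}_X$ is convergent on the spectra of $\mathbf{S}$). In that case $$\boldsymbol{\mathcal{L}}_X(\mathbf{S})=\mathbf{P}\,\mathrm{blkdiag}\big(\boldsymbol{\mathcal{L}}_X(\mathbf{J}_i)\big)_{i=1}^k\,\mathbf{P}^{-1},$$ where each $\boldsymbol{\mathcal{L}}_X(\mathbf{J}_i)$ is the upper triangular Toeplitz matrix whose first row has entries $\boldsymbol{\mathcal{L}}_X(\mathbf{J}_i)_{1,j}=\frac{1}{(j-1)!}\mathbb{E}\left[(-X)^{j-1}e^{-\lambda_iX}\right]$, $j\in\{1,\dots,m_i\}$. (ii) Assume further that $X$ takes values only in $\mathbb{R}_+$, that all eigenvalues of $\mathbf{S}$ lie in the region of convergence of the scalar Laplace transform $\mathcal{L}_X(s)=\mathbb{E}[e^{-sX}]$,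 and that all eigenvalues corresponding to Jordan blocks of size larger than $1$ lie in the interior of this region of convergence. Then $\mathcal{L}_X$ is defined on the spectrum of $\mathbf{S}$, and $\boldsymbol{\mathcal{L}}_X(\mathbf{S})$ equals the matrix function $\boldsymbol{f}(\mathbf{S})$ corresponding to $f=\mathcal{L}_X$.
   Context: For a random variable $X$ and deterministic $\mathbf{S}\in\mathbb{C}^{n\times n}$, the matrix Laplace transform is $\boldsymbol{\mathcal{L}}_X(\mathbf{S})=\mathbb{E}[\exp(-\mathbf{S}X)]$ (expectation taken entrywise, $\exp$ the matrix exponential); it is said to exist if each entry is a well-defined finite complex number. The region of convergence of $\mathcal{L}_X$ is the set of $s\in\mathbb{C}$ for which $\mathbb{E}[e^{-sX}]$ converges. Matrix function: for $f:\mathbb{C}\to\mathbb{C}$ and $\mathbf{S}$ with distinct eigenvalues $\lambda_1,\dots,\lambda_p$ whose largest Jordan blocks have sizes $n_1,\dots,n_p$, $f$ is defined on the spectrum of $\mathbf{S}$ if $f^{(j)}(\lambda_m)$ exists for all $j\in\{0,\dots,n_m-1\}$ and all $m$; then $\boldsymbol{f}(\mathbf{S})=\mathbf{P}\,\mathrm{blkdiag}(\boldsymbol{f}(\mathbf{J}_i))_{i}\,\mathbf{P}^{-1}$ where $\boldsymbol{f}(\mathbf{J}_i)$ is upper triangular Toeplitz with first row $\big(f(\lambda_i), f^{(1)}(\lambda_i), \tfrac{1}{2!}f^{(2)}(\lambda_i),\dots,\tfrac{1}{(m_i-1)!}f^{(m_i-1)}(\lambda_i)\big)$. *)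

theory Defs
  imports "HOL-Probability.Probability" "Jordan_Normal_Form.Jordan_Normal_Form"
begin

definition mexp :: "complex mat \<Rightarrow> complex mat" where
  "mexp A = mat (dim_row A) (dim_col A)
     (\<lambda>(i,j). \<Sum>k. (A ^\<^sub>m k) $$ (i,j) / of_nat (fact k))"

definition mlaplace_exists :: "'w measure \<Rightarrow> ('w \<Rightarrow> complex) \<Rightarrow> complex mat \<Rightarrow> bool" where
  "mlaplace_exists M X S =
     (\<forall>i < dim_row S. \<forall>j < dim_col S.
        integrable M (\<lambda>\<omega>. mexp ((- X \<omega>) \<cdot>\<^sub>m S) $$ (i,j)))"

definition mlaplace :: "'w measure \<Rightarrow> ('w \<Rightarrow> complex) \<Rightarrow> complex mat \<Rightarrow> complex mat" where
  "mlaplace M X S = mat (dim_row S) (dim_col S)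
     (\<lambda>(i,j). LINT \<omega>|M. mexp ((- X \<omega>) \<cdot>\<^sub>m S) $$ (i,j))"

definition laplace :: "'w measure \<Rightarrow> ('w \<Rightarrow> complex) \<Rightarrow> complex \<Rightarrow> complex" where
  "laplace M X s = (LINT \<omega>|M. exp (- s * X \<omega>))"

definition laplace_roc :: "'w measure \<Rightarrow> ('w \<Rightarrow> complex) \<Rightarrow> complex set" where
  "laplace_roc M X = {s. integrable M (\<lambda>\<omega>. exp (- s * X \<omega>))}"

definition laplace_block :: "'w measure \<Rightarrow> ('w \<Rightarrow> complex) \<Rightarrow> nat \<Rightarrow> complex \<Rightarrow> complex mat" where
  "laplace_block M X m l = mat m m (\<lambda>(r,c).
     if r \<le> c then (LINT \<omega>|M. (- X \<omega>) ^ (c - r) * exp (- l * X \<omega>)) / of_nat (fact (c - r))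
     else 0)"

text \<open>Jordan decomposition S = P * blkdiag(J_i) * P^-1, with Q = P^-1; blocks given as
  (size, eigenvalue) pairs with positive sizes.\<close>
definition jordan_decomp :: "complex mat \<Rightarrow> complex mat \<Rightarrow> (nat \<times> complex) list \<Rightarrow> complex mat \<Rightarrow> bool" where
  "jordan_decomp S P bs Q =
     (let n = dim_row S in
       S \<in> carrier_mat n n \<and> P \<in> carrier_mat n n \<and> Q \<in> carrier_mat n n \<and>
       P * Q = 1\<^sub>m n \<and> Q * P = 1\<^sub>m n \<and>
       (\<forall>(m,l) \<in> set bs. 0 < m) \<and> sum_list (map fst bs) = n \<and>
       S = P * jordan_matrix bs * Q)"

text \<open>f is defined on the spectrum of S: for every eigenvalue l with a Jordan block of
  size m, the derivatives f^(j)(l), j = 0..m-1, exist (complex derivatives; the j-th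
  derivative requires the (j-1)-th one to exist near l and be differentiable at l).\<close>
definition defined_on_spectrum :: "(complex \<Rightarrow> complex) \<Rightarrow> complex mat \<Rightarrow> bool" where
  "defined_on_spectrum f S =
     (\<forall>P bs Q. jordan_decomp S P bs Q \<longrightarrow>
        (\<forall>(m,l) \<in> set bs. \<forall>i. Suc i < m \<longrightarrow>
           (deriv ^^ i) f field_differentiable at l \<and>
           (Suc (Suc i) < m \<longrightarrow> (\<forall>\<^sub>F w in nhds l. (deriv ^^ i) f field_differentiable at w))))"

definition fun_block :: "(complex \<Rightarrow> complex) \<Rightarrow> nat \<Rightarrow> complex \<Rightarrow> complex mat" where
  "fun_block f m l = mat m m (\<lambda>(r,c).
     if r \<le> c then (deriv ^^ (c - r)) f l / of_nat (fact (c - r)) else 0)"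

definition matrix_function :: "(complex \<Rightarrow> complex) \<Rightarrow> complex mat \<Rightarrow> complex mat" where
  "matrix_function f S =
     (let (P, bs, Q) = (SOME (P, bs, Q). jordan_decomp S P bs Q)
      in P * diag_block_mat (map (\<lambda>(m,l). fun_block f m l) bs) * Q)"

end

theory Submission
  imports Defs "Jordan_Normal_Form.Jordan_Normal_Form_Uniqueness"
begin

(*
  Writing S = P J P^-1 with J in Jordan form, exp (-X S) = P exp (-X J) P^-1, and exp (-X J) is
  block diagonal: the block of an eigenvalue l of size m is upper triangular Toeplitz with
  entries (-X)^k e^(-l X) / k!, k < m.  Entrywise expectation commutes with multiplication by
  constant matrices and with the block structure, which gives (i).

  For (ii), let X >= 0, let s be interior to the region of convergence and pick a point z0 of
  the region with Re z0 < Re s.  Near s, the integrands (-X)^k e^(-s X) and the second-order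
  remainders of their difference quotients are dominated by multiples of |e^(-z0 X)|, so one
  may differentiate under the expectation: the k-th derivative of the Laplace transform is
  E[(-X)^k e^(-s X)], and the blocks of (i) are exactly f(J_i).  Uniqueness of the Jordan form
  makes this independent of the decomposition chosen by matrix_function.
*)

section \<open>Block diagonal matrices\<close>

lemma diag_block_mat_carrier:
  assumes "\<And>b. b \<in> set bs \<Longrightarrow> F b \<in> carrier_mat (d b) (d b)"
  shows "diag_block_mat (map F bs) \<in> carrier_mat (sum_list (map d bs)) (sum_list (map d bs))"
  using assms by (induction bs) (auto simp: Let_def)

lemma diag_block_mat_Cons_four_block:
  assumes "A \<in> carrier_mat k k" and "diag_block_mat As \<in> carrier_mat N N"
  shows "diag_block_mat (A # As) = four_block_mat A (0\<^sub>m k N) (0\<^sub>m N k) (diag_block_mat As)"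
  using assms by (simp add: Let_def)

lemma four_block_mat_entrywise:
  fixes g :: "('w \<Rightarrow> 'a::zero) \<Rightarrow> 'c::zero"
  assumes g0: "g (\<lambda>_. 0) = 0"
    and A: "\<And>\<omega>. A \<omega> \<in> carrier_mat k k" and B: "\<And>\<omega>. B \<omega> \<in> carrier_mat N N"
  shows "mat (k + N) (k + N) (\<lambda>(i, j). g (\<lambda>\<omega>. four_block_mat (A \<omega>) (0\<^sub>m k N) (0\<^sub>m N k) (B \<omega>) $$ (i, j)))
    = four_block_mat (mat k k (\<lambda>(i, j). g (\<lambda>\<omega>. A \<omega> $$ (i, j)))) (0\<^sub>m k N) (0\<^sub>m N k)
        (mat N N (\<lambda>(i, j). g (\<lambda>\<omega>. B \<omega> $$ (i, j))))"
proof -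
  have [simp]: "dim_row (A \<omega>) = k" "dim_col (A \<omega>) = k" "dim_row (B \<omega>) = N" "dim_col (B \<omega>) = N"
    for \<omega> using A B by auto
  show ?thesis by (intro eq_matI) (auto simp: g0)
qed

lemma four_block_mat_entries_iff:
  assumes P0: "Pr (\<lambda>_. 0)"
    and A: "\<And>\<omega>. A \<omega> \<in> carrier_mat k k" and B: "\<And>\<omega>. B \<omega> \<in> carrier_mat N N"
  shows "(\<forall>i < k + N. \<forall>j < k + N. Pr (\<lambda>\<omega>. four_block_mat (A \<omega>) (0\<^sub>m k N) (0\<^sub>m N k) (B \<omega>) $$ (i, j)))
    \<longleftrightarrow> (\<forall>i < k. \<forall>j < k. Pr (\<lambda>\<omega>. A \<omega> $$ (i, j))) \<and> (\<forall>i < N. \<forall>j < N. Pr (\<lambda>\<omega>. B \<omega> $$ (i, j)))"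
    (is "?L \<longleftrightarrow> ?A \<and> ?B")
proof -
  have [simp]: "dim_row (A \<omega>) = k" "dim_col (A \<omega>) = k" "dim_row (B \<omega>) = N" "dim_col (B \<omega>) = N"
    for \<omega> using A B by auto
  show ?thesis
  proof safe
    fix i j assume L: ?L
    show "Pr (\<lambda>\<omega>. A \<omega> $$ (i, j))" if "i < k" "j < k"
      using L[rule_format, of i j] that by simp
    show "Pr (\<lambda>\<omega>. B \<omega> $$ (i, j))" if "i < N" "j < N"
      using L[rule_format, of "i + k" "j + k"] that by simp
  next
    fix i j assume ?A ?B "i < k + N" "j < k + N"
    then show "Pr (\<lambda>\<omega>. four_block_mat (A \<omega>) (0\<^sub>m k N) (0\<^sub>m N k) (B \<omega>) $$ (i, j))"
      using P0 by (cases "i < k"; cases "j < k") auto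
  qed
qed

(* g stands for an operation on families of scalars, e.g. an integral or the sum of a series. *)
lemma diag_block_mat_entrywise:
  fixes g :: "('w \<Rightarrow> 'a::zero) \<Rightarrow> 'c::zero"
  assumes g0: "g (\<lambda>_. 0) = 0"
    and F: "\<And>b \<omega>. b \<in> set bs \<Longrightarrow> F b \<omega> \<in> carrier_mat (d b) (d b)"
  shows "mat (sum_list (map d bs)) (sum_list (map d bs))
           (\<lambda>(i, j). g (\<lambda>\<omega>. diag_block_mat (map (\<lambda>b. F b \<omega>) bs) $$ (i, j)))
         = diag_block_mat (map (\<lambda>b. mat (d b) (d b) (\<lambda>(i, j). g (\<lambda>\<omega>. F b \<omega> $$ (i, j)))) bs)"
  using F
proof (induction bs)
  case (Cons a bs)
  let ?G = "\<lambda>b. mat (d b) (d b) (\<lambda>(i, j). g (\<lambda>\<omega>. F b \<omega> $$ (i, j)))"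
  have Fa: "F a \<omega> \<in> carrier_mat (d a) (d a)" for \<omega>
    using Cons.prems by simp
  have Fbs: "diag_block_mat (map (\<lambda>b. F b \<omega>) bs) \<in> carrier_mat (sum_list (map d bs)) (sum_list (map d bs))"
    for \<omega> using Cons.prems by (intro diag_block_mat_carrier) auto
  have Gbs: "diag_block_mat (map ?G bs) \<in> carrier_mat (sum_list (map d bs)) (sum_list (map d bs))"
    by (intro diag_block_mat_carrier) auto
  have Ga: "?G a \<in> carrier_mat (d a) (d a)" by simp
  have IH: "mat (sum_list (map d bs)) (sum_list (map d bs))
      (\<lambda>(i, j). g (\<lambda>\<omega>. diag_block_mat (map (\<lambda>b. F b \<omega>) bs) $$ (i, j))) = diag_block_mat (map ?G bs)"
    using Cons.prems by (intro Cons.IH) auto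
  have "mat (sum_list (map d (a # bs))) (sum_list (map d (a # bs)))
      (\<lambda>(i, j). g (\<lambda>\<omega>. diag_block_mat (map (\<lambda>b. F b \<omega>) (a # bs)) $$ (i, j)))
    = mat (d a + sum_list (map d bs)) (d a + sum_list (map d bs)) (\<lambda>(i, j). g (\<lambda>\<omega>.
        four_block_mat (F a \<omega>) (0\<^sub>m (d a) (sum_list (map d bs))) (0\<^sub>m (sum_list (map d bs)) (d a))
          (diag_block_mat (map (\<lambda>b. F b \<omega>) bs)) $$ (i, j)))"
    by (simp only: list.map sum_list.Cons diag_block_mat_Cons_four_block[OF Fa Fbs])
  also have "\<dots> = four_block_mat (?G a) (0\<^sub>m (d a) (sum_list (map d bs))) (0\<^sub>m (sum_list (map d bs)) (d a))
      (diag_block_mat (map ?G bs))"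
    unfolding four_block_mat_entrywise[where g = g and A = "\<lambda>\<omega>. F a \<omega>"
        and B = "\<lambda>\<omega>. diag_block_mat (map (\<lambda>b. F b \<omega>) bs)", OF g0 Fa Fbs] IH ..
  also have "\<dots> = diag_block_mat (map ?G (a # bs))"
    by (simp only: list.map diag_block_mat_Cons_four_block[OF Ga Gbs])
  finally show ?case .
qed (rule eq_matI; simp)

lemma diag_block_mat_entries_iff:
  assumes P0: "Pr (\<lambda>_. 0)"
    and F: "\<And>b \<omega>. b \<in> set bs \<Longrightarrow> F b \<omega> \<in> carrier_mat (d b) (d b)"
  shows "(\<forall>i < sum_list (map d bs). \<forall>j < sum_list (map d bs).
            Pr (\<lambda>\<omega>. diag_block_mat (map (\<lambda>b. F b \<omega>) bs) $$ (i, j)))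
         \<longleftrightarrow> (\<forall>b \<in> set bs. \<forall>i < d b. \<forall>j < d b. Pr (\<lambda>\<omega>. F b \<omega> $$ (i, j)))"
  using F
proof (induction bs)
  case (Cons a bs)
  have Fa: "F a \<omega> \<in> carrier_mat (d a) (d a)" for \<omega>
    using Cons.prems by simp
  have Fbs: "diag_block_mat (map (\<lambda>b. F b \<omega>) bs) \<in> carrier_mat (sum_list (map d bs)) (sum_list (map d bs))"
    for \<omega> using Cons.prems by (intro diag_block_mat_carrier) auto
  show ?case
    using four_block_mat_entries_iff[where Pr = Pr and A = "\<lambda>\<omega>. F a \<omega>"
        and B = "\<lambda>\<omega>. diag_block_mat (map (\<lambda>b. F b \<omega>) bs)", OF P0 Fa Fbs] Cons
    by (simp add: diag_block_mat_Cons_four_block[OF Fa Fbs] del: diag_block_mat.simps)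
qed simp

lemma map_diag_block_mat:
  assumes "f 0 = 0"
  shows "map_mat f (diag_block_mat As) = diag_block_mat (map (map_mat f) As)"
proof -
  have zero: "map_mat f (0\<^sub>m r c) = 0\<^sub>m r c" for r c
    using assms by (intro eq_matI) auto
  show ?thesis
    by (induction As) (auto simp: zero Let_def dim_diag_block_mat o_def
        map_four_block_mat[OF carrier_matI carrier_matI carrier_matI carrier_matI])
qed

lemma index_mult_mult_mat:
  fixes P B Q :: "'a::comm_semiring_0 mat"
  assumes "P \<in> carrier_mat n n" "B \<in> carrier_mat n n" "Q \<in> carrier_mat n n" "i < n" "j < n"
  shows "(P * B * Q) $$ (i, j) = (\<Sum>a<n. \<Sum>b<n. P $$ (i, a) * B $$ (a, b) * Q $$ (b, j))"
  using assms by (simp add: scalar_prod_def lessThan_atLeast0 sum_distrib_left sum_distrib_right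
      sum.swap[of _ "{..<n}"] mult.assoc)

lemma smult_pow_mat:
  fixes A :: "'a::comm_ring_1 mat"
  assumes "A \<in> carrier_mat n n"
  shows "(c \<cdot>\<^sub>m A) ^\<^sub>m k = c ^ k \<cdot>\<^sub>m A ^\<^sub>m k"
proof (induction k)
  case (Suc k)
  have "(c \<cdot>\<^sub>m A) ^\<^sub>m Suc k = (c ^ k \<cdot>\<^sub>m A ^\<^sub>m k) * (c \<cdot>\<^sub>m A)"
    using Suc by simp
  also have "\<dots> = c ^ Suc k \<cdot>\<^sub>m (A ^\<^sub>m k * A)"
    using assms by (intro eq_matI) (auto simp: scalar_prod_def sum_distrib_left mult_ac)
  finally show ?case by simp
qed (use assms in auto)

section \<open>Entrywise integration of matrix-valued functions\<close>

lemma integrable_divide_iff: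
  fixes f :: "'a \<Rightarrow> 'b::{real_normed_field, field, second_countable_topology}"
  assumes "c \<noteq> 0"
  shows "integrable M (\<lambda>x. f x / c) \<longleftrightarrow> integrable M f"
proof
  assume "integrable M (\<lambda>x. f x / c)"
  then have "integrable M (\<lambda>x. f x / c * c)" by (rule integrable_mult_left)
  then show "integrable M f" using assms by simp
qed simp

definition integrable_mat :: "'w measure \<Rightarrow> nat \<Rightarrow> ('w \<Rightarrow> complex mat) \<Rightarrow> bool" where
  "integrable_mat M n A \<longleftrightarrow> (\<forall>i<n. \<forall>j<n. integrable M (\<lambda>\<omega>. A \<omega> $$ (i, j)))"

definition integral_mat :: "'w measure \<Rightarrow> nat \<Rightarrow> ('w \<Rightarrow> complex mat) \<Rightarrow> complex mat" where
  "integral_mat M n A = mat n n (\<lambda>(i, j). LINT \<omega>|M. A \<omega> $$ (i, j))"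

lemma integrable_mat_mult_mult:
  assumes B: "integrable_mat M n B" "\<And>\<omega>. B \<omega> \<in> carrier_mat n n"
    and P: "P \<in> carrier_mat n n" and Q: "Q \<in> carrier_mat n n"
  shows "integrable_mat M n (\<lambda>\<omega>. P * B \<omega> * Q)"
  unfolding integrable_mat_def
proof (intro allI impI)
  fix i j assume ij: "i < n" "j < n"
  have "integrable M (\<lambda>\<omega>. \<Sum>a<n. \<Sum>b<n. P $$ (i, a) * B \<omega> $$ (a, b) * Q $$ (b, j))"
    using B by (auto simp: integrable_mat_def intro!: Bochner_Integration.integrable_sum
        integrable_mult_left integrable_mult_right)
  then show "integrable M (\<lambda>\<omega>. (P * B \<omega> * Q) $$ (i, j))"
    by (simp add: index_mult_mult_mat[OF P B(2) Q ij])
qed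

lemma integral_mat_mult_mult:
  assumes B: "integrable_mat M n B" "\<And>\<omega>. B \<omega> \<in> carrier_mat n n"
    and P: "P \<in> carrier_mat n n" and Q: "Q \<in> carrier_mat n n"
  shows "integral_mat M n (\<lambda>\<omega>. P * B \<omega> * Q) = P * integral_mat M n B * Q"
proof (rule eq_matI)
  have int: "integrable M (\<lambda>\<omega>. B \<omega> $$ (a, b))" if "a < n" "b < n" for a b
    using B(1) that by (simp add: integrable_mat_def)
  fix i j assume "i < dim_row (P * integral_mat M n B * Q)" "j < dim_col (P * integral_mat M n B * Q)"
  then have ij: "i < n" "j < n" using P Q by auto
  have "integral_mat M n (\<lambda>\<omega>. P * B \<omega> * Q) $$ (i, j)
      = (LINT \<omega>|M. (\<Sum>a<n. \<Sum>b<n. P $$ (i, a) * B \<omega> $$ (a, b) * Q $$ (b, j)))"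
    using ij by (simp add: integral_mat_def index_mult_mult_mat[OF P B(2) Q ij])
  also have "\<dots> = (\<Sum>a<n. \<Sum>b<n. LINT \<omega>|M. P $$ (i, a) * B \<omega> $$ (a, b) * Q $$ (b, j))"
    using int by (subst Bochner_Integration.integral_sum) (auto intro!: sum.cong
        Bochner_Integration.integral_sum)
  also have "\<dots> = (\<Sum>a<n. \<Sum>b<n. P $$ (i, a) * (LINT \<omega>|M. B \<omega> $$ (a, b)) * Q $$ (b, j))"
    by simp
  also have "\<dots> = (P * integral_mat M n B * Q) $$ (i, j)"
    by (simp add: index_mult_mult_mat[OF P _ Q ij] integral_mat_def)
  finally show "integral_mat M n (\<lambda>\<omega>. P * B \<omega> * Q) $$ (i, j) = (P * integral_mat M n B * Q) $$ (i, j)" .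
qed (use P Q in \<open>auto simp: integral_mat_def\<close>)

lemma integrable_mat_similar_iff:
  assumes sim: "\<And>\<omega>. similar_mat_wit (A \<omega>) (B \<omega>) P Q" and A: "\<And>\<omega>. A \<omega> \<in> carrier_mat n n"
  shows "integrable_mat M n A \<longleftrightarrow> integrable_mat M n B"
proof -
  note D = similar_mat_witD2[OF A sim]
  note D' = similar_mat_witD2[OF D(5) similar_mat_wit_sym[OF sim]]
  show ?thesis
  proof
    assume "integrable_mat M n A"
    then have "integrable_mat M n (\<lambda>\<omega>. Q * A \<omega> * P)"
      using A D(6,7) by (intro integrable_mat_mult_mult)
    then show "integrable_mat M n B" by (simp flip: D'(3))
  next
    assume "integrable_mat M n B"
    then have "integrable_mat M n (\<lambda>\<omega>. P * B \<omega> * Q)"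
      using D(5-7) by (intro integrable_mat_mult_mult)
    then show "integrable_mat M n A" by (simp flip: D(3))
  qed
qed

lemma integral_mat_similar:
  assumes sim: "\<And>\<omega>. similar_mat_wit (A \<omega>) (B \<omega>) P Q" and A: "\<And>\<omega>. A \<omega> \<in> carrier_mat n n"
    and B: "integrable_mat M n B"
  shows "integral_mat M n A = P * integral_mat M n B * Q"
proof -
  note D = similar_mat_witD2[OF A sim]
  have "integral_mat M n A = integral_mat M n (\<lambda>\<omega>. P * B \<omega> * Q)"
    by (simp flip: D(3))
  also have "\<dots> = P * integral_mat M n B * Q"
    using B D(5-7) by (rule integral_mat_mult_mult)
  finally show ?thesis .
qed

lemma integrable_mat_diag_block_mat_iff:
  assumes "\<And>b \<omega>. b \<in> set bs \<Longrightarrow> F b \<omega> \<in> carrier_mat (d b) (d b)"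
  shows "integrable_mat M (sum_list (map d bs)) (\<lambda>\<omega>. diag_block_mat (map (\<lambda>b. F b \<omega>) bs))
     \<longleftrightarrow> (\<forall>b \<in> set bs. integrable_mat M (d b) (F b))"
  unfolding integrable_mat_def by (rule diag_block_mat_entries_iff[OF _ assms]) simp

lemma integral_mat_diag_block_mat:
  assumes "\<And>b \<omega>. b \<in> set bs \<Longrightarrow> F b \<omega> \<in> carrier_mat (d b) (d b)"
  shows "integral_mat M (sum_list (map d bs)) (\<lambda>\<omega>. diag_block_mat (map (\<lambda>b. F b \<omega>) bs))
     = diag_block_mat (map (\<lambda>b. integral_mat M (d b) (F b)) bs)"
  unfolding integral_mat_def by (rule diag_block_mat_entrywise[OF _ assms]) simp

section \<open>The matrix exponential\<close>

lemma norm_index_pow_mat_le: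
  fixes A :: "'a::real_normed_algebra_1 mat"
  assumes A: "A \<in> carrier_mat n n" and K: "\<And>a b. a < n \<Longrightarrow> b < n \<Longrightarrow> norm (A $$ (a, b)) \<le> K"
    and ij: "i < n" "j < n"
  shows "norm ((A ^\<^sub>m k) $$ (i, j)) \<le> (n * K) ^ k"
  using ij
proof (induction k arbitrary: j)
  case 0
  then show ?case using A by simp
next
  case (Suc k)
  have "0 \<le> K" using order.trans[OF norm_ge_zero K[OF Suc.prems(1,1)]] .
  have "norm ((A ^\<^sub>m Suc k) $$ (i, j)) = norm (\<Sum>a<n. (A ^\<^sub>m k) $$ (i, a) * A $$ (a, j))"
    using A Suc.prems by (simp add: scalar_prod_def lessThan_atLeast0)
  also have "\<dots> \<le> (\<Sum>a<n. (n * K) ^ k * K)"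
    by (intro sum_norm_le order.trans[OF norm_mult_ineq] mult_mono Suc.IH K Suc.prems)
      (use \<open>0 \<le> K\<close> in auto)
  also have "\<dots> = (n * K) ^ Suc k" by simp
  finally show ?case .
qed

lemma summable_mexp_series:
  fixes A :: "complex mat"
  assumes A: "A \<in> carrier_mat n n" and ij: "i < n" "j < n"
  shows "summable (\<lambda>k. (A ^\<^sub>m k) $$ (i, j) / fact k)"
proof -
  define K where "K = (\<Sum>a<n. \<Sum>b<n. norm (A $$ (a, b)))"
  have K: "norm (A $$ (a, b)) \<le> K" if "a < n" "b < n" for a b
    unfolding K_def using that
    by (intro order.trans[OF _ member_le_sum[of a]] member_le_sum[of b]) (auto intro: sum_nonneg)
  show ?thesis
  proof (rule summable_comparison_test')
    show "summable (\<lambda>k. inverse (fact k) * (n * K) ^ k)" by (rule summable_exp)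
    show "norm ((A ^\<^sub>m k) $$ (i, j) / fact k) \<le> inverse (fact k) * (n * K) ^ k" for k
      using norm_index_pow_mat_le[OF A K ij, of k] by (simp add: norm_divide divide_simps)
  qed
qed

lemma mexp_similar:
  assumes wit: "similar_mat_wit A B P Q"
  shows "similar_mat_wit (mexp A) (mexp B) P Q"
proof -
  define n where "n = dim_row A"
  note D = similar_mat_witD[OF n_def wit]
  have mexp_carrier: "mexp C \<in> carrier_mat n n" if "C \<in> carrier_mat n n" for C
    using that by (simp add: mexp_def)
  have eq: "mexp A = P * mexp B * Q"
  proof (rule eq_matI)
    fix i j assume "i < dim_row (P * mexp B * Q)" "j < dim_col (P * mexp B * Q)"
    then have ij: "i < n" "j < n" using D by auto
    have "(\<lambda>k. \<Sum>a<n. \<Sum>b<n. P $$ (i, a) * ((B ^\<^sub>m k) $$ (a, b) / of_nat (fact k)) * Q $$ (b, j))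
        sums (\<Sum>a<n. \<Sum>b<n. P $$ (i, a) * mexp B $$ (a, b) * Q $$ (b, j))"
      using D by (intro sums_sum sums_mult sums_mult2)
        (auto simp: mexp_def intro!: summable_sums summable_mexp_series[OF D(5)])
    moreover have "(A ^\<^sub>m k) $$ (i, j) / of_nat (fact k)
        = (\<Sum>a<n. \<Sum>b<n. P $$ (i, a) * ((B ^\<^sub>m k) $$ (a, b) / of_nat (fact k)) * Q $$ (b, j))" for k
      using D(5-7) ij by (simp add: similar_mat_wit_pow_id[OF wit] sum_divide_distrib
          index_mult_mult_mat[OF D(6) pow_carrier_mat[OF D(5)] D(7) ij])
    ultimately have "(\<lambda>k. (A ^\<^sub>m k) $$ (i, j) / of_nat (fact k)) sums (P * mexp B * Q) $$ (i, j)"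
      by (simp add: index_mult_mult_mat[OF D(6) mexp_carrier[OF D(5)] D(7) ij])
    then show "mexp A $$ (i, j) = (P * mexp B * Q) $$ (i, j)"
      using D ij by (simp add: mexp_def sums_iff)
  qed (use D(4-7) in \<open>simp_all add: mexp_def\<close>)
  show ?thesis
    by (rule similar_mat_witI[OF D(1,2) eq mexp_carrier[OF D(4)] mexp_carrier[OF D(5)] D(6,7)])
qed

lemma mexp_diag_block_mat:
  assumes sq: "\<And>A. A \<in> set As \<Longrightarrow> square_mat A"
  shows "mexp (diag_block_mat As) = diag_block_mat (map mexp As)"
proof -
  let ?N = "sum_list (map dim_row As)"
  let ?g = "\<lambda>f. \<Sum>k. f k / of_nat (fact k) :: complex"
  have dim_col: "dim_col A = dim_row A" if "A \<in> set As" for A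
    using sq[OF that] by simp
  then have cols: "map dim_col As = map dim_row As"
    by (intro map_cong) auto
  have dims: "dim_row (diag_block_mat As) = ?N" "dim_col (diag_block_mat As) = ?N"
    unfolding dim_diag_block_mat cols by simp_all
  have pow: "diag_block_mat As ^\<^sub>m k = diag_block_mat (map (\<lambda>A. A ^\<^sub>m k) As)" for k
    by (rule diag_block_pow_mat) (use sq in blast)
  have "mexp (diag_block_mat As) = mat ?N ?N
      (\<lambda>(i, j). ?g (\<lambda>k. diag_block_mat (map (\<lambda>A. A ^\<^sub>m k) As) $$ (i, j)))"
    by (simp add: mexp_def dims pow)
  also have "\<dots> = diag_block_mat (map (\<lambda>A. mat (dim_row A) (dim_row A)
      (\<lambda>(i, j). ?g (\<lambda>k. (A ^\<^sub>m k) $$ (i, j)))) As)"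
  proof (rule diag_block_mat_entrywise)
    show "A ^\<^sub>m k \<in> carrier_mat (dim_row A) (dim_row A)" if "A \<in> set As" for A k
      using dim_col[OF that] by (intro pow_carrier_mat carrier_matI) auto
  qed simp
  also have "\<dots> = diag_block_mat (map mexp As)"
    unfolding mexp_def by (intro arg_cong[of _ _ diag_block_mat] map_cong refl) (simp add: dim_col)
  finally show ?thesis .
qed

lemma sums_choose_exp:
  fixes t z :: complex
  shows "(\<lambda>k. t ^ k * (of_nat (k choose d) * z ^ (k - d)) / fact k) sums (t ^ d * exp (t * z) / fact d)"
proof -
  have shift: "(\<lambda>k. t ^ (k + d) * (of_nat ((k + d) choose d) * z ^ (k + d - d)) / fact (k + d))
      = (\<lambda>k. t ^ d / fact d * ((t * z) ^ k / fact k))"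
  proof
    fix k
    have "fact d * fact k * ((k + d) choose d) = fact (k + d)"
      using binomial_fact_lemma[of d "k + d"] by simp
    then have "fact (k + d) = (fact d * fact k * of_nat ((k + d) choose d) :: complex)"
      by (metis of_nat_fact of_nat_mult)
    then show "t ^ (k + d) * (of_nat ((k + d) choose d) * z ^ (k + d - d)) / fact (k + d)
        = t ^ d / fact d * ((t * z) ^ k / fact k)"
      by (simp add: power_add power_mult_distrib)
  qed
  have "(\<lambda>k. (t * z) ^ k / fact k) sums exp (t * z)"
    using exp_converges[of "t * z"] by (simp add: scaleR_conv_of_real divide_inverse mult.commute)
  then have "(\<lambda>k. t ^ (k + d) * (of_nat ((k + d) choose d) * z ^ (k + d - d)) / fact (k + d))
      sums (t ^ d / fact d * exp (t * z))"
    unfolding shift by (rule sums_mult)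
  then show ?thesis
    by (subst (asm) sums_zero_iff_shift) (auto simp: binomial_eq_0)
qed

lemma mexp_smult_jordan_block:
  "mexp (t \<cdot>\<^sub>m jordan_block m l) =
     mat m m (\<lambda>(r, c). if r \<le> c then t ^ (c - r) * exp (t * l) / fact (c - r) else 0)"
  (is "_ = ?E")
proof (rule eq_matI)
  fix r c assume "r < dim_row ?E" "c < dim_col ?E"
  then have rc: "r < m" "c < m" by auto
  have entry: "((t \<cdot>\<^sub>m jordan_block m l) ^\<^sub>m k) $$ (r, c)
      = (if r \<le> c then t ^ k * (of_nat (k choose (c - r)) * l ^ (k + r - c)) else 0)" for k
    using rc by (simp add: smult_pow_mat[OF jordan_block_carrier] jordan_block_pow)
  show "mexp (t \<cdot>\<^sub>m jordan_block m l) $$ (r, c) = ?E $$ (r, c)"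
  proof (cases "r \<le> c")
    case True
    then have "(\<lambda>k. ((t \<cdot>\<^sub>m jordan_block m l) ^\<^sub>m k) $$ (r, c) / fact k)
        = (\<lambda>k. t ^ k * (of_nat (k choose (c - r)) * l ^ (k - (c - r))) / fact k)"
      by (simp add: entry diff_diff_right)
    with True rc sums_choose_exp[of t "c - r" l] show ?thesis
      by (simp add: mexp_def sums_iff)
  qed (use rc in \<open>simp add: mexp_def entry\<close>)
qed (simp_all add: mexp_def)

lemma mexp_smult_jordan_matrix:
  "mexp (t \<cdot>\<^sub>m jordan_matrix bs) = diag_block_mat (map (\<lambda>(m, l). mexp (t \<cdot>\<^sub>m jordan_block m l)) bs)"
proof -
  have "t \<cdot>\<^sub>m jordan_matrix bs = diag_block_mat (map (\<lambda>(m, l). t \<cdot>\<^sub>m jordan_block m l) bs)"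
    unfolding jordan_matrix_def smult_mat_def
    by (subst map_diag_block_mat) (auto intro!: arg_cong[of _ _ diag_block_mat])
  also have "mexp \<dots> = diag_block_mat (map mexp (map (\<lambda>(m, l). t \<cdot>\<^sub>m jordan_block m l) bs))"
    by (rule mexp_diag_block_mat) auto
  finally show ?thesis by (simp add: o_def split_def)
qed

lemma mexp_smult_similar_jordan:
  assumes "similar_mat_wit S (jordan_matrix bs) P Q"
  shows "similar_mat_wit (mexp (t \<cdot>\<^sub>m S))
           (diag_block_mat (map (\<lambda>(m, l). mexp (t \<cdot>\<^sub>m jordan_block m l)) bs)) P Q"
  using mexp_similar[OF similar_mat_wit_smult[OF assms]] by (simp only: mexp_smult_jordan_matrix)

section \<open>The matrix Laplace transform of a Jordan decomposition\<close>

lemma integrable_mat_exp_jordan_block_iff: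
  "integrable_mat M m (\<lambda>\<omega>. mexp ((- X \<omega>) \<cdot>\<^sub>m jordan_block m l))
   \<longleftrightarrow> (\<forall>j \<in> {1..m}. integrable M (\<lambda>\<omega>. (- X \<omega>) ^ (j - 1) * exp (- l * X \<omega>)))"
proof -
  have entry: "integrable M (\<lambda>\<omega>. mexp ((- X \<omega>) \<cdot>\<^sub>m jordan_block m l) $$ (r, c))
      \<longleftrightarrow> (r \<le> c \<longrightarrow> integrable M (\<lambda>\<omega>. (- X \<omega>) ^ (c - r) * exp (- l * X \<omega>)))"
    if "r < m" "c < m" for r c
    using that by (cases "r \<le> c") (simp_all add: mexp_smult_jordan_block integrable_divide_iff mult.commute)
  show ?thesis
  proof
    assume "integrable_mat M m (\<lambda>\<omega>. mexp ((- X \<omega>) \<cdot>\<^sub>m jordan_block m l))"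
    then show "\<forall>j \<in> {1..m}. integrable M (\<lambda>\<omega>. (- X \<omega>) ^ (j - 1) * exp (- l * X \<omega>))"
      unfolding integrable_mat_def using entry[of 0 "j - 1" for j] by force
  next
    assume moments: "\<forall>j \<in> {1..m}. integrable M (\<lambda>\<omega>. (- X \<omega>) ^ (j - 1) * exp (- l * X \<omega>))"
    have "integrable M (\<lambda>\<omega>. (- X \<omega>) ^ (c - r) * exp (- l * X \<omega>))" if "c < m" for r c
      using moments[rule_format, of "Suc (c - r)"] that by simp
    then show "integrable_mat M m (\<lambda>\<omega>. mexp ((- X \<omega>) \<cdot>\<^sub>m jordan_block m l))"
      unfolding integrable_mat_def using entry by simp
  qed
qed

lemma integral_mat_exp_jordan_block:
  "integral_mat M m (\<lambda>\<omega>. mexp ((- X \<omega>) \<cdot>\<^sub>m jordan_block m l)) = laplace_block M X m l"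
  by (rule eq_matI) (auto simp: integral_mat_def laplace_block_def mexp_smult_jordan_block mult.commute)

lemma mlaplace_exists_similar_iff:
  assumes sim: "\<And>\<omega>. similar_mat_wit (mexp ((- X \<omega>) \<cdot>\<^sub>m S)) (E \<omega>) P Q"
    and S: "S \<in> carrier_mat n n"
  shows "mlaplace_exists M X S \<longleftrightarrow> integrable_mat M n E"
proof -
  have A: "mexp ((- X \<omega>) \<cdot>\<^sub>m S) \<in> carrier_mat n n" for \<omega>
    using S by (simp add: mexp_def)
  have "mlaplace_exists M X S \<longleftrightarrow> integrable_mat M n (\<lambda>\<omega>. mexp ((- X \<omega>) \<cdot>\<^sub>m S))"
    using S by (simp add: mlaplace_exists_def integrable_mat_def)
  also have "\<dots> \<longleftrightarrow> integrable_mat M n E"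
    by (rule integrable_mat_similar_iff[OF sim A])
  finally show ?thesis .
qed

lemma mlaplace_similar:
  assumes sim: "\<And>\<omega>. similar_mat_wit (mexp ((- X \<omega>) \<cdot>\<^sub>m S)) (E \<omega>) P Q"
    and S: "S \<in> carrier_mat n n" and "mlaplace_exists M X S"
  shows "mlaplace M X S = P * integral_mat M n E * Q"
proof -
  have A: "mexp ((- X \<omega>) \<cdot>\<^sub>m S) \<in> carrier_mat n n" for \<omega>
    using S by (simp add: mexp_def)
  have "integrable_mat M n E"
    using assms mlaplace_exists_similar_iff by blast
  have "mlaplace M X S = integral_mat M n (\<lambda>\<omega>. mexp ((- X \<omega>) \<cdot>\<^sub>m S))"
    using S by (simp add: mlaplace_def integral_mat_def)
  also have "\<dots> = P * integral_mat M n E * Q"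
    by (rule integral_mat_similar[OF sim A \<open>integrable_mat M n E\<close>])
  finally show ?thesis .
qed

lemma similar_jordan_carrier:
  assumes "similar_mat_wit S (jordan_matrix bs) P Q"
  shows "S \<in> carrier_mat (sum_list (map fst bs)) (sum_list (map fst bs))"
proof -
  note D = similar_mat_witD[OF refl assms]
  have "dim_row (jordan_matrix bs) = dim_row S"
    using D(5) by (rule carrier_matD)
  then have n: "sum_list (map fst bs) = dim_row S"
    by (simp only: jordan_matrix_dim)
  show ?thesis unfolding n by (rule D(4))
qed

lemma mlaplace_exists_jordan_iff:
  assumes sim: "similar_mat_wit S (jordan_matrix bs) P Q"
  shows "mlaplace_exists M X S \<longleftrightarrow>
      (\<forall>(m, l) \<in> set bs. \<forall>j \<in> {1..m}. integrable M (\<lambda>\<omega>. (- X \<omega>) ^ (j - 1) * exp (- l * X \<omega>)))"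
proof -
  let ?F = "\<lambda>b \<omega>. mexp ((- X \<omega>) \<cdot>\<^sub>m jordan_block (fst b) (snd b))"
  have "mlaplace_exists M X S
      \<longleftrightarrow> integrable_mat M (sum_list (map fst bs)) (\<lambda>\<omega>. diag_block_mat (map (\<lambda>b. ?F b \<omega>) bs))"
    using mexp_smult_similar_jordan[OF sim]
    by (intro mlaplace_exists_similar_iff similar_jordan_carrier[OF sim]) (simp add: split_def)
  also have "\<dots> \<longleftrightarrow> (\<forall>b \<in> set bs. integrable_mat M (fst b) (?F b))"
    by (rule integrable_mat_diag_block_mat_iff) (simp add: mexp_def)
  finally show ?thesis
    by (simp add: integrable_mat_exp_jordan_block_iff split_def)
qed

lemma mlaplace_jordan:
  assumes sim: "similar_mat_wit S (jordan_matrix bs) P Q" and "mlaplace_exists M X S"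
  shows "mlaplace M X S = P * diag_block_mat (map (\<lambda>(m, l). laplace_block M X m l) bs) * Q"
proof -
  let ?F = "\<lambda>b \<omega>. mexp ((- X \<omega>) \<cdot>\<^sub>m jordan_block (fst b) (snd b))"
  have "mlaplace M X S
      = P * integral_mat M (sum_list (map fst bs)) (\<lambda>\<omega>. diag_block_mat (map (\<lambda>b. ?F b \<omega>) bs)) * Q"
    using mexp_smult_similar_jordan[OF sim] assms(2)
    by (intro mlaplace_similar similar_jordan_carrier[OF sim]) (simp_all add: split_def)
  also have "integral_mat M (sum_list (map fst bs)) (\<lambda>\<omega>. diag_block_mat (map (\<lambda>b. ?F b \<omega>) bs))
      = diag_block_mat (map (\<lambda>b. integral_mat M (fst b) (?F b)) bs)"
    by (rule integral_mat_diag_block_mat) (simp add: mexp_def)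
  finally show ?thesis
    by (simp add: integral_mat_exp_jordan_block split_def)
qed

lemma jordan_decomp_iff:
  "jordan_decomp S P bs Q \<longleftrightarrow> 0 \<notin> fst ` set bs \<and> similar_mat_wit S (jordan_matrix bs) P Q"
proof -
  have "(\<forall>(m, l) \<in> set bs. 0 < m) \<longleftrightarrow> 0 \<notin> fst ` set bs"
    by (auto simp: image_iff split_def)
  moreover have "jordan_matrix bs \<in> carrier_mat (dim_row S) (dim_row S) \<longleftrightarrow> sum_list (map fst bs) = dim_row S"
    unfolding carrier_mat_def by simp
  ultimately show ?thesis
    unfolding jordan_decomp_def similar_mat_wit_def Let_def by blast
qed

lemma jordan_decomp_same_blocks:
  assumes "jordan_decomp S P bs Q" and "jordan_decomp S P' bs' Q'"
  shows "set bs' = set bs"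
  using assms by (intro jordan_nf_unique) (auto simp: jordan_decomp_iff jordan_nf_def similar_mat_def)

lemma matrix_function_jordan_decomp:
  assumes "jordan_decomp S P bs Q"
  obtains P' bs' Q' where "jordan_decomp S P' bs' Q'"
    and "matrix_function f S = P' * diag_block_mat (map (\<lambda>(m, l). fun_block f m l) bs') * Q'"
proof -
  obtain P' bs' Q' where some: "(SOME (P, bs, Q). jordan_decomp S P bs Q) = (P', bs', Q')"
    by (metis prod_cases3)
  have "(\<lambda>(P, bs, Q). jordan_decomp S P bs Q) (SOME (P, bs, Q). jordan_decomp S P bs Q)"
    using assms by (intro someI_ex[of "\<lambda>(P, bs, Q). jordan_decomp S P bs Q"]) auto
  then have "jordan_decomp S P' bs' Q'" by (simp add: some)
  then show ?thesis by (rule that) (simp add: matrix_function_def some)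
qed

section \<open>Derivatives of the Laplace transform of a nonnegative variable\<close>

definition laplace_moment :: "'w measure \<Rightarrow> ('w \<Rightarrow> complex) \<Rightarrow> nat \<Rightarrow> complex \<Rightarrow> complex" where
  "laplace_moment M X k s = (LINT \<omega>|M. (- X \<omega>) ^ k * exp (- s * X \<omega>))"

lemma power_div_fact_le_exp:
  fixes x :: real
  assumes "0 \<le> x"
  shows "x ^ k / fact k \<le> exp x"
proof -
  have "x ^ k / fact k \<le> (\<Sum>n\<le>k. x ^ n / fact n)"
    using assms by (intro member_le_sum) auto
  also have "\<dots> \<le> exp x"
    using summable_exp_generic[of x] assms
    by (auto simp: exp_def divide_inverse ac_simps intro!: sum_le_suminf)
  finally show ?thesis .
qed

lemma power_mult_exp_le:
  fixes t e a b :: real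
  assumes t: "0 \<le> t" and e: "0 < e" and ab: "a + e \<le> b"
  shows "t ^ k * exp (- b * t) \<le> fact k / e ^ k * exp (- a * t)"
proof -
  have "e ^ k * t ^ k \<le> fact k * exp (e * t)"
    using power_div_fact_le_exp[of "e * t" k] t e by (simp add: power_mult_distrib field_simps)
  then have "t ^ k \<le> fact k / e ^ k * exp (e * t)"
    using e by (simp add: field_simps)
  then have "t ^ k * exp (- b * t) \<le> fact k / e ^ k * exp (e * t) * exp (- b * t)"
    by (rule mult_right_mono) simp
  also have "\<dots> = fact k / e ^ k * (exp (e * t) * exp (- b * t))"
    by (rule mult.assoc)
  also have "\<dots> \<le> fact k / e ^ k * exp (- a * t)"
  proof (rule mult_left_mono)
    have "(a + e) * t \<le> b * t" using ab t by (rule mult_right_mono)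
    then show "exp (e * t) * exp (- b * t) \<le> exp (- a * t)"
      by (simp add: algebra_simps flip: exp_add)
  qed (use e in simp)
  finally show ?thesis .
qed

lemma norm_moment_integrand_le:
  fixes x z z0 :: complex and e :: real
  assumes x: "x \<in> \<real>" "0 \<le> Re x" and e: "0 < e" and z: "Re z0 + e \<le> Re z"
  shows "norm ((- x) ^ k * exp (- z * x)) \<le> fact k / e ^ k * norm (exp (- z0 * x))"
proof -
  obtain t where t: "x = of_real t" "0 \<le> t" using x by (auto elim: Reals_cases)
  have "norm ((- x) ^ k * exp (- z * x)) = t ^ k * exp (- Re z * t)"
    using t by (simp add: norm_mult norm_power norm_exp_eq_Re)
  also have "\<dots> \<le> fact k / e ^ k * exp (- Re z0 * t)"
    using t e z by (intro power_mult_exp_le) auto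
  also have "\<dots> = fact k / e ^ k * norm (exp (- z0 * x))"
    using t by (simp add: norm_exp_eq_Re)
  finally show ?thesis .
qed

lemma norm_exp_remainder_le:
  fixes w :: complex
  shows "norm (exp w - 1 - w) \<le> norm w ^ 2 * exp (norm w)"
proof -
  have "(\<Sum>i\<le>(1::nat). w ^ i / fact i) = 1 + w" by simp
  then show ?thesis
    using Taylor_exp_field[of w 1] by (simp add: diff_diff_eq power2_eq_square mult.commute)
qed

(* The remainder is (-x)^k e^(-s x) (e^w - 1 - w) with w = -h x; the factor e^|w| in the
   bound for e^w - 1 - w is absorbed by moving s to the left by |h|. *)
lemma norm_moment_integrand_remainder_le:
  fixes x s h z0 :: complex and e :: real
  assumes x: "x \<in> \<real>" "0 \<le> Re x" and e: "0 < e" and h: "norm h \<le> e"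
    and s: "Re z0 + 2 * e \<le> Re s"
  shows "norm ((- x) ^ k * exp (- (s + h) * x) - (- x) ^ k * exp (- s * x)
           - h * ((- x) ^ Suc k * exp (- s * x)))
         \<le> norm h ^ 2 * (fact (k + 2) / e ^ (k + 2) * norm (exp (- z0 * x)))"
proof -
  obtain t where t: "x = of_real t" "0 \<le> t" using x by (auto elim: Reals_cases)
  define w where "w = - (h * x)"
  have "(- x) ^ k * exp (- (s + h) * x) - (- x) ^ k * exp (- s * x) - h * ((- x) ^ Suc k * exp (- s * x))
      = (- x) ^ k * exp (- s * x) * (exp w - 1 - w)"
    by (simp add: w_def algebra_simps exp_add flip: exp_add)
  then have "norm ((- x) ^ k * exp (- (s + h) * x) - (- x) ^ k * exp (- s * x)
           - h * ((- x) ^ Suc k * exp (- s * x)))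
      \<le> t ^ k * exp (- Re s * t) * (norm w ^ 2 * exp (norm w))"
    using t norm_exp_remainder_le[of w]
    by (simp add: norm_mult norm_power norm_exp_eq_Re mult_left_mono)
  also have "\<dots> = norm h ^ 2 * norm ((- x) ^ (k + 2) * exp (- (s - of_real (norm h)) * x))"
    using t by (simp add: w_def norm_mult norm_power norm_exp_eq_Re power_add power2_eq_square
        exp_add[symmetric] algebra_simps)
  also have "\<dots> \<le> norm h ^ 2 * (fact (k + 2) / e ^ (k + 2) * norm (exp (- z0 * x)))"
    using x e h s by (intro mult_left_mono norm_moment_integrand_le) auto
  finally show ?thesis .
qed

lemma has_field_derivative_quadratic_bound:
  fixes f :: "'a::real_normed_field \<Rightarrow> 'a"
  assumes e: "0 < e" and bound: "\<And>h. norm h \<le> e \<Longrightarrow> norm (f (s + h) - f s - h * D) \<le> C * norm h ^ 2"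
  shows "(f has_field_derivative D) (at s)"
  unfolding has_field_derivative_iff
proof (rule LIM_zero_cancel, rule Lim_null_comparison)
  show "\<forall>\<^sub>F y in at s. norm ((f y - f s) / (y - s) - D) \<le> C * norm (y - s)"
    unfolding eventually_at
  proof (intro exI[of _ e] conjI ballI impI)
    fix y assume "y \<noteq> s \<and> dist y s < e"
    then have y: "y - s \<noteq> 0" "norm (y - s) \<le> e" by (auto simp: dist_norm)
    have "norm ((f y - f s) / (y - s) - D) = norm (f (s + (y - s)) - f s - (y - s) * D) / norm (y - s)"
      using y by (simp add: norm_divide field_simps)
    also have "\<dots> \<le> C * norm (y - s) ^ 2 / norm (y - s)"
      using bound[OF y(2)] by (simp add: divide_right_mono)
    also have "\<dots> = C * norm (y - s)"
      using y by (simp add: power2_eq_square)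
    finally show "norm ((f y - f s) / (y - s) - D) \<le> C * norm (y - s)" .
  qed (use e in simp)
  show "((\<lambda>y. C * norm (y - s)) \<longlongrightarrow> 0) (at s)"
    by (auto intro!: tendsto_eq_intros)
qed

lemma interior_laplace_roc_left_point:
  assumes "s \<in> interior (laplace_roc M X)"
  obtains e where "0 < e" "s - of_real (2 * e) \<in> laplace_roc M X"
proof -
  obtain r where r: "0 < r" "ball s r \<subseteq> laplace_roc M X"
    using assms by (auto simp: mem_interior)
  have "s - of_real (2 * (r / 3)) \<in> ball s r"
    using r by (simp add: dist_norm)
  with r show ?thesis by (intro that[of "r / 3"]) auto
qed

context
  fixes M :: "'w measure" and X :: "'w \<Rightarrow> complex"
  assumes X: "X \<in> borel_measurable M"
    and nonneg: "\<forall>\<omega> \<in> space M. X \<omega> \<in> \<real> \<and> 0 \<le> Re (X \<omega>)"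
begin

lemma integrable_laplace_moment:
  assumes z0: "z0 \<in> laplace_roc M X" and z: "Re z0 < Re z"
  shows "integrable M (\<lambda>\<omega>. (- X \<omega>) ^ k * exp (- z * X \<omega>))"
proof (rule Bochner_Integration.integrable_bound)
  define e where "e = Re z - Re z0"
  have e: "0 < e" "Re z0 + e \<le> Re z" using z by (auto simp: e_def)
  show "integrable M (\<lambda>\<omega>. fact k / e ^ k * norm (exp (- z0 * X \<omega>)))"
    using z0 unfolding laplace_roc_def
    by (intro Bochner_Integration.integrable_mult_right Bochner_Integration.integrable_norm) simp
  show "(\<lambda>\<omega>. (- X \<omega>) ^ k * exp (- z * X \<omega>)) \<in> borel_measurable M"
    using X by measurable
  show "AE \<omega> in M. norm ((- X \<omega>) ^ k * exp (- z * X \<omega>))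
      \<le> norm (fact k / e ^ k * norm (exp (- z0 * X \<omega>)))"
  proof (rule AE_I2)
    fix \<omega> assume "\<omega> \<in> space M"
    then have "norm ((- X \<omega>) ^ k * exp (- z * X \<omega>)) \<le> fact k / e ^ k * norm (exp (- z0 * X \<omega>))"
      using nonneg e by (intro norm_moment_integrand_le) auto
    then show "norm ((- X \<omega>) ^ k * exp (- z * X \<omega>))
        \<le> norm (fact k / e ^ k * norm (exp (- z0 * X \<omega>)))"
      using e by (simp add: abs_mult)
  qed
qed

lemma integrable_laplace_moment_interior:
  assumes "s \<in> interior (laplace_roc M X)"
  shows "integrable M (\<lambda>\<omega>. (- X \<omega>) ^ k * exp (- s * X \<omega>))"
proof -
  obtain e where "0 < e" "s - of_real (2 * e) \<in> laplace_roc M X"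
    using assms by (rule interior_laplace_roc_left_point)
  then show ?thesis by (intro integrable_laplace_moment) auto
qed

lemma norm_laplace_moment_remainder_le:
  assumes z0: "z0 \<in> laplace_roc M X" and e: "0 < e" and s: "Re z0 + 2 * e \<le> Re s"
    and h: "norm h \<le> e"
  shows "norm (laplace_moment M X k (s + h) - laplace_moment M X k s - h * laplace_moment M X (Suc k) s)
    \<le> norm h ^ 2 * (fact (k + 2) / e ^ (k + 2) * (LINT \<omega>|M. norm (exp (- z0 * X \<omega>))))"
proof -
  have "Re z0 < Re (s + h)" "Re z0 < Re s"
    using abs_Re_le_cmod[of h] e s h by auto
  note ints = integrable_laplace_moment[OF z0 this(1), of k]
    integrable_laplace_moment[OF z0 this(2), of k] integrable_laplace_moment[OF z0 this(2), of "Suc k"]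
  define R where "R \<omega> = (- X \<omega>) ^ k * exp (- (s + h) * X \<omega>) - (- X \<omega>) ^ k * exp (- s * X \<omega>)
      - h * ((- X \<omega>) ^ Suc k * exp (- s * X \<omega>))" for \<omega>
  have "norm (laplace_moment M X k (s + h) - laplace_moment M X k s - h * laplace_moment M X (Suc k) s)
      = norm (LINT \<omega>|M. R \<omega>)"
    using ints by (simp add: laplace_moment_def R_def)
  also have "\<dots> \<le> (LINT \<omega>|M. norm (R \<omega>))"
    by (rule integral_norm_bound)
  also have "\<dots> \<le> (LINT \<omega>|M. norm h ^ 2 * (fact (k + 2) / e ^ (k + 2) * norm (exp (- z0 * X \<omega>))))"
  proof (rule integral_mono)
    show "integrable M (\<lambda>\<omega>. norm (R \<omega>))"
      using ints unfolding R_def by (intro Bochner_Integration.integrable_norm) auto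
    show "integrable M (\<lambda>\<omega>. norm h ^ 2 * (fact (k + 2) / e ^ (k + 2) * norm (exp (- z0 * X \<omega>))))"
      using z0 unfolding laplace_roc_def
      by (intro Bochner_Integration.integrable_mult_right Bochner_Integration.integrable_norm) simp
    show "norm (R \<omega>) \<le> norm h ^ 2 * (fact (k + 2) / e ^ (k + 2) * norm (exp (- z0 * X \<omega>)))"
      if "\<omega> \<in> space M" for \<omega>
      unfolding R_def using nonneg that e h s by (intro norm_moment_integrand_remainder_le) auto
  qed
  also have "\<dots> = norm h ^ 2 * (fact (k + 2) / e ^ (k + 2) * (LINT \<omega>|M. norm (exp (- z0 * X \<omega>))))"
    by simp
  finally show ?thesis .
qed

lemma laplace_moment_has_field_derivative:
  assumes "s \<in> interior (laplace_roc M X)"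
  shows "(laplace_moment M X k has_field_derivative laplace_moment M X (Suc k) s) (at s)"
proof -
  obtain e where e: "0 < e" and z0: "s - of_real (2 * e) \<in> laplace_roc M X"
    using assms by (rule interior_laplace_roc_left_point)
  define C where "C = fact (k + 2) / e ^ (k + 2) * (LINT \<omega>|M. norm (exp (- (s - of_real (2 * e)) * X \<omega>)))"
  show ?thesis
  proof (rule has_field_derivative_quadratic_bound[OF e])
    fix h :: complex assume "norm h \<le> e"
    then show "norm (laplace_moment M X k (s + h) - laplace_moment M X k s
        - h * laplace_moment M X (Suc k) s) \<le> C * norm h ^ 2"
      using norm_laplace_moment_remainder_le[OF z0 e, of s h k] by (simp add: C_def mult.commute)
  qed
qed

lemma higher_deriv_laplace:
  "s \<in> interior (laplace_roc M X) \<Longrightarrow> (deriv ^^ k) (laplace M X) s = laplace_moment M X k s"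
proof (induction k arbitrary: s)
  case 0
  show ?case by (simp add: laplace_def laplace_moment_def)
next
  case (Suc k)
  have "eventually (\<lambda>z. (deriv ^^ k) (laplace M X) z = laplace_moment M X k z) (nhds s)"
    using eventually_nhds_in_open[OF open_interior Suc.prems] by (rule eventually_mono) (rule Suc.IH)
  then have "(deriv ^^ Suc k) (laplace M X) s = deriv (laplace_moment M X k) s"
    by (simp add: deriv_cong_ev)
  also have "\<dots> = laplace_moment M X (Suc k) s"
    by (rule DERIV_imp_deriv[OF laplace_moment_has_field_derivative[OF Suc.prems]])
  finally show ?case .
qed

lemma higher_deriv_laplace_field_differentiable:
  assumes s: "s \<in> interior (laplace_roc M X)"
  shows "(deriv ^^ k) (laplace M X) field_differentiable at s"
  unfolding field_differentiable_def
  using has_field_derivative_transform_within_open[OF laplace_moment_has_field_derivative[OF s]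
      open_interior s] higher_deriv_laplace by metis

lemma laplace_block_eq_fun_block:
  assumes "l \<in> laplace_roc M X" and "1 < m \<Longrightarrow> l \<in> interior (laplace_roc M X)"
  shows "laplace_block M X m l = fun_block (laplace M X) m l"
proof (rule eq_matI)
  fix r c assume "r < dim_row (fun_block (laplace M X) m l)" "c < dim_col (fun_block (laplace M X) m l)"
  then have rc: "r < m" "c < m" by (simp_all add: fun_block_def)
  have "laplace_moment M X (c - r) l = (deriv ^^ (c - r)) (laplace M X) l"
  proof (cases "1 < m")
    case True
    then show ?thesis using higher_deriv_laplace[OF assms(2)] by simp
  next
    case False
    then show ?thesis using rc by (simp add: laplace_def laplace_moment_def)
  qed
  then show "laplace_block M X m l $$ (r, c) = fun_block (laplace M X) m l $$ (r, c)"
    using rc by (simp add: laplace_block_def fun_block_def laplace_moment_def)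
qed (simp_all add: laplace_block_def fun_block_def)

context
  fixes S P Q :: "complex mat" and bs :: "(nat \<times> complex) list"
  assumes decomp: "jordan_decomp S P bs Q"
    and roc: "\<forall>(m, l) \<in> set bs. l \<in> laplace_roc M X \<and> (1 < m \<longrightarrow> l \<in> interior (laplace_roc M X))"
begin

lemma mlaplace_exists_roc: "mlaplace_exists M X S"
  unfolding mlaplace_exists_jordan_iff[OF decomp[unfolded jordan_decomp_iff, THEN conjunct2]]
proof (intro ballI, clarify)
  fix m l j assume ml: "(m, l) \<in> set bs" and j: "j \<in> {1..m}"
  show "integrable M (\<lambda>\<omega>. (- X \<omega>) ^ (j - 1) * exp (- l * X \<omega>))"
  proof (cases "1 < m")
    case True
    then have "l \<in> interior (laplace_roc M X)" using roc ml by auto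
    then show ?thesis by (rule integrable_laplace_moment_interior)
  next
    case False
    then show ?thesis using roc ml j by (auto simp: laplace_roc_def)
  qed
qed

lemma defined_on_spectrum_laplace: "defined_on_spectrum (laplace M X) S"
  unfolding defined_on_spectrum_def
proof (intro allI impI ballI)
  fix P' bs' Q' b assume decomp': "jordan_decomp S P' bs' Q'" and b: "b \<in> set bs'"
  obtain m l where b_def: "b = (m, l)" by fastforce
  have diff: "(deriv ^^ i) (laplace M X) field_differentiable at w"
    if "w \<in> interior (laplace_roc M X)" for i w
    using that by (rule higher_deriv_laplace_field_differentiable)
  have "(deriv ^^ i) (laplace M X) field_differentiable at l \<and>
      (\<forall>\<^sub>F w in nhds l. (deriv ^^ i) (laplace M X) field_differentiable at w)" if "Suc i < m" for i
  proof -
    have l: "l \<in> interior (laplace_roc M X)"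
      using that roc b jordan_decomp_same_blocks[OF decomp decomp'] by (auto simp: b_def)
    show ?thesis
      using diff[OF l] eventually_nhds_in_open[OF open_interior l]
      by (auto elim: eventually_mono intro: diff)
  qed
  then show "case b of (m, l) \<Rightarrow> \<forall>i. Suc i < m \<longrightarrow>
      (deriv ^^ i) (laplace M X) field_differentiable at l \<and>
      (Suc (Suc i) < m \<longrightarrow> (\<forall>\<^sub>F w in nhds l. (deriv ^^ i) (laplace M X) field_differentiable at w))"
    by (simp add: b_def)
qed

lemma mlaplace_eq_matrix_function: "mlaplace M X S = matrix_function (laplace M X) S"
proof -
  obtain P' bs' Q' where decomp': "jordan_decomp S P' bs' Q'"
    and mf: "matrix_function (laplace M X) S
      = P' * diag_block_mat (map (\<lambda>(m, l). fun_block (laplace M X) m l) bs') * Q'"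
    using decomp by (rule matrix_function_jordan_decomp)
  have "mlaplace M X S = P' * diag_block_mat (map (\<lambda>(m, l). laplace_block M X m l) bs') * Q'"
    using decomp' mlaplace_exists_roc by (intro mlaplace_jordan) (simp_all add: jordan_decomp_iff)
  also have "map (\<lambda>(m, l). laplace_block M X m l) bs' = map (\<lambda>(m, l). fun_block (laplace M X) m l) bs'"
    using roc jordan_decomp_same_blocks[OF decomp decomp']
    by (intro map_cong) (auto intro!: laplace_block_eq_fun_block)
  finally show ?thesis by (simp add: mf)
qed

end

end

theorem proposition1:
  fixes M :: "'w measure" and X :: "'w \<Rightarrow> complex" and S P Q :: "complex mat"
    and bs :: "(nat \<times> complex) list" and n :: nat
  assumes "prob_space M"
    and "X \<in> borel_measurable M"
    and "S \<in> carrier_mat n n" and "P \<in> carrier_mat n n" and "Q \<in> carrier_mat n n"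
    and "P * Q = 1\<^sub>m n" and "Q * P = 1\<^sub>m n"
    and "\<forall>(m,l) \<in> set bs. 0 < m"
    and "sum_list (map fst bs) = n"
    and "S = P * jordan_matrix bs * Q"
  shows "(mlaplace_exists M X S \<longleftrightarrow>
            (\<forall>(m,l) \<in> set bs. \<forall>j \<in> {1..m}.
               integrable M (\<lambda>\<omega>. (- X \<omega>) ^ (j - 1) * exp (- l * X \<omega>))))
       \<and> (mlaplace_exists M X S \<longrightarrow>
            mlaplace M X S = P * diag_block_mat (map (\<lambda>(m,l). laplace_block M X m l) bs) * Q)
       \<and> ((\<forall>\<omega> \<in> space M. X \<omega> \<in> \<real> \<and> 0 \<le> Re (X \<omega>))
          \<and> (\<forall>(m,l) \<in> set bs. l \<in> laplace_roc M X \<and> (1 < m \<longrightarrow> l \<in> interior (laplace_roc M X)))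
          \<longrightarrow> defined_on_spectrum (laplace M X) S \<and> mlaplace_exists M X S
              \<and> mlaplace M X S = matrix_function (laplace M X) S)"
proof -
  have dim: "dim_row S = n" using assms(3) by simp
  have decomp: "jordan_decomp S P bs Q"
    unfolding jordan_decomp_def Let_def dim by (intro conjI) (rule assms)+
  then have sim: "similar_mat_wit S (jordan_matrix bs) P Q"
    by (simp add: jordan_decomp_iff)
  have "defined_on_spectrum (laplace M X) S \<and> mlaplace_exists M X S
      \<and> mlaplace M X S = matrix_function (laplace M X) S"
    if nonneg: "\<forall>\<omega> \<in> space M. X \<omega> \<in> \<real> \<and> 0 \<le> Re (X \<omega>)"
      and roc: "\<forall>(m,l) \<in> set bs. l \<in> laplace_roc M X \<and> (1 < m \<longrightarrow> l \<in> interior (laplace_roc M X))"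
    using defined_on_spectrum_laplace[OF assms(2) nonneg decomp roc]
      mlaplace_exists_roc[OF assms(2) nonneg decomp roc]
      mlaplace_eq_matrix_function[OF assms(2) nonneg decomp roc] by blast
  then show ?thesis
    using mlaplace_exists_jordan_iff[OF sim] mlaplace_jordan[OF sim] by blast
qed

end
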